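(* For every $K>0$ there exist a uniformly continuous function $\hat g_K:\mathbb{R}\to\mathbb{R}$ and a number $x_K\ge K$ such that: (i) $\hat g_K$ is affine on $[x_K,\infty)$ and on $(-\infty,-x_K]$; (ii) $\hat g_K=\hat g$ on $[-K,K]$; (iii) $\hat g_K\ge\hat g$; (iv) $\hat g_K-\bar\Gamma$ is concave for every $C^2$ function $\bar\Gamma$ satisfying $\partial^2_{xx}\bar\Gamma=\bar\gamma$. Moreover, the family $(\hat g_K)_{K>0}$ is uniformly bounded (in absolute value) by a function with linear growth and converges to $\hat g$ uniformly on compact sets as $K\to\infty$.
   Context: Standing assumptions: $f\in C^2_b(\mathbb{R})$ with $\inf f>0$; $\bar\gamma:\mathbb{R}\to\mathbb{R}$ is bounded and continuous with $\iota\le\bar\gamma\le1/f-\iota$ for some $\iota>0$; $g:\mathbb{R}\to\mathbb{R}$ is lower semicontinuous with $g^-$ bounded and $g^+$ of linear growth; $\hat g:=(g-\bar\Gamma)^{\rm conc}+\bar\Gamma$ where $\bar\Gamma$ is any $C^2$ function with $\partial^2_{xx}\bar\Gamma=\bar\gamma$ and ${}^{\rm conc}$ denotes the concave envelope (independent of the choice of $\bar\Gamma$); $\hat g$ is assumed uniformly continuous. *)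

theory Defs
  imports "HOL-Analysis.Analysis"
begin

definition lsc :: "(real \<Rightarrow> real) \<Rightarrow> bool" where
  "lsc g \<longleftrightarrow> (\<forall>x. \<forall>c. c < g x \<longrightarrow> (\<forall>\<^sub>F y in at x. c < g y))"

definition conc_env :: "(real \<Rightarrow> real) \<Rightarrow> real \<Rightarrow> real" where
  "conc_env h x = Inf {\<phi> x | \<phi>. concave_on UNIV \<phi> \<and> (\<forall>y. h y \<le> \<phi> y)}"

definition C2b :: "(real \<Rightarrow> real) \<Rightarrow> bool" where
  "C2b f \<longleftrightarrow> (\<exists>f1 f2. (\<forall>x. (f has_real_derivative f1 x) (at x)) \<and>
      (\<forall>x. (f1 has_real_derivative f2 x) (at x)) \<and> continuous_on UNIV f2 \<and>
      bounded (range f) \<and> bounded (range f1) \<and> bounded (range f2))"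

definition C2_with_second_deriv :: "(real \<Rightarrow> real) \<Rightarrow> (real \<Rightarrow> real) \<Rightarrow> bool" where
  "C2_with_second_deriv \<Gamma> \<gamma> \<longleftrightarrow> continuous_on UNIV \<gamma> \<and> (\<exists>\<Gamma>1.
      (\<forall>x. (\<Gamma> has_real_derivative \<Gamma>1 x) (at x)) \<and>
      (\<forall>x. (\<Gamma>1 has_real_derivative \<gamma> x) (at x)))"

end

theory Submission
  imports Defs
begin

(* Write \hat g = h + \<Gamma> with h the concave envelope of g - \<Gamma>.  Being uniformly continuous,
   \hat g grows at most like A + B|x|, while \<Gamma>'' \<ge> \<iota> > 0 makes \<Gamma> grow quadratically.  Hence h has a
   concave majorant \<Psi> with \<Psi> + \<Gamma> = C + B|x| outside a compact set, where C = A + 2B\<^sup>2/\<iota>.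
   For each K, extend h|[-K,K] by supporting lines to a concave E \<ge> h; far out the quadratically
   decaying \<Psi> lies below the affine E, so \<Gamma> + min E \<Psi> agrees with \hat g on [-K,K], lies above it,
   is \<Gamma>-concave and equals C + B|x| near infinity.  The constants B, C do not depend on K, which gives
   the uniform linear bound. *)

lemma concave_on_realI_supergradient:
  fixes f :: "real \<Rightarrow> real"
  assumes "\<And>z. \<exists>s. \<forall>x. f x \<le> f z + s * (x - z)"
  shows "concave_on UNIV f"
proof (rule concave_on_linorderI)
  fix t x y :: real assume t: "0 < t" "t < 1"
  define z where "z = (1 - t) *\<^sub>R x + t *\<^sub>R y"
  obtain s where s: "\<And>w. f w \<le> f z + s * (w - z)" using assms by blast
  have "(1 - t) * f x + t * f y \<le> (1 - t) * (f z + s * (x - z)) + t * (f z + s * (y - z))"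
    using s[of x] s[of y] t by (intro add_mono mult_left_mono) auto
  also have "\<dots> = f z" by (simp add: z_def algebra_simps)
  finally show "(1 - t) * f x + t * f y \<le> f z" .
qed simp

lemma concave_on_real_supergradient:
  fixes f :: "real \<Rightarrow> real"
  assumes f: "concave_on UNIV f"
  obtains s where "\<And>x. f x \<le> f z + s * (x - z)"
proof -
  have slope_antimono: "(f y - f z) / (y - z) \<le> (f z - f x) / (z - x)" if "x < z" "z < y" for x y
  proof -
    have "convex_on UNIV (\<lambda>x. - f x)" using f by (simp add: concave_on_def)
    from convex_on_slope_le[OF this _ _ that]
    have "(- f x + f z) / (x - z) \<le> (- f z + f y) / (z - y)" by simp
    with that show ?thesis by (simp add: field_simps)
  qed
  define s where "s = Inf ((\<lambda>x. (f z - f x) / (z - x)) ` {..<z})"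
  have bdd: "bdd_below ((\<lambda>x. (f z - f x) / (z - x)) ` {..<z})"
    using slope_antimono[of _ "z + 1"] by (intro bdd_belowI2) auto
  show ?thesis
  proof
    fix x
    consider "x < z" | "x = z" | "z < x" by linarith
    then show "f x \<le> f z + s * (x - z)"
    proof cases
      case 1
      then have "s \<le> (f z - f x) / (z - x)" unfolding s_def using bdd by (intro cInf_lower) auto
      with 1 show ?thesis by (simp add: le_divide_eq algebra_simps)
    next
      case 3
      then have "(f x - f z) / (x - z) \<le> s" unfolding s_def
        by (intro cInf_greatest) (auto intro: slope_antimono)
      with 3 show ?thesis by (simp add: divide_le_eq algebra_simps)
    qed simp
  qed
qed

lemma concave_on_glue_tangent_right:
  fixes f :: "real \<Rightarrow> real"
  assumes f: "concave_on UNIV f" and tangent: "\<And>x. f x \<le> f K + s * (x - K)"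
  shows "concave_on UNIV (\<lambda>x. if x \<le> K then f x else f K + s * (x - K))"
    (is "concave_on UNIV ?E")
proof (rule concave_on_realI_supergradient)
  fix z
  show "\<exists>t. \<forall>x. ?E x \<le> ?E z + t * (x - z)"
  proof (cases "K \<le> z")
    case True
    then show ?thesis using tangent by (intro exI[of _ s]) (auto simp: algebra_simps)
  next
    case False
    obtain t where t: "\<And>x. f x \<le> f z + t * (x - z)" using concave_on_real_supergradient[OF f, where z = z] by blast
    have "0 \<le> (t - s) * (K - z)" using t[of K] tangent[of z] by (simp add: algebra_simps)
    with False have "s \<le> t" by (simp add: zero_le_mult_iff)
    then have "f K + s * (x - K) \<le> f z + t * (x - z)" if "K < x" for x
      using that t[of K] mult_right_mono[of s t "x - K"] by (simp add: algebra_simps)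
    with t False show ?thesis by (intro exI[of _ t]) auto
  qed
qed

lemma concave_on_glue_tangent_left:
  fixes f :: "real \<Rightarrow> real"
  assumes f: "concave_on UNIV f" and tangent: "\<And>x. f x \<le> f K + s * (x - K)"
  shows "concave_on UNIV (\<lambda>x. if K \<le> x then f x else f K + s * (x - K))"
    (is "concave_on UNIV ?E")
proof (rule concave_on_realI_supergradient)
  fix z
  show "\<exists>t. \<forall>x. ?E x \<le> ?E z + t * (x - z)"
  proof (cases "z \<le> K")
    case True
    then show ?thesis using tangent by (intro exI[of _ s]) (auto simp: algebra_simps)
  next
    case False
    obtain t where t: "\<And>x. f x \<le> f z + t * (x - z)" using concave_on_real_supergradient[OF f, where z = z] by blast
    have "0 \<le> (s - t) * (z - K)" using t[of K] tangent[of z] by (simp add: algebra_simps)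
    with False have "t \<le> s" by (simp add: zero_le_mult_iff)
    then have "f K + s * (x - K) \<le> f z + t * (x - z)" if "x < K" for x
      using that t[of K] mult_right_mono_neg[of t s "x - K"] by (simp add: algebra_simps)
    with t False show ?thesis by (intro exI[of _ t]) auto
  qed
qed

lemma concave_on_min:
  assumes "concave_on S f" "concave_on S g"
  shows "concave_on S (\<lambda>x. min (f x) (g x))"
  unfolding concave_on_iff
proof (intro conjI ballI allI impI)
  show "convex S" using assms(1) concave_on_imp_convex by blast
next
  fix x y and u v :: real assume xy: "x \<in> S" "y \<in> S" and uv: "0 \<le> u" "0 \<le> v" "u + v = 1"
  have "u * f x + v * f y \<le> f (u *\<^sub>R x + v *\<^sub>R y)" "u * g x + v * g y \<le> g (u *\<^sub>R x + v *\<^sub>R y)"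
    using assms xy uv by (auto simp: concave_on_iff)
  moreover have "u * min (f x) (g x) + v * min (f y) (g y) \<le> min (u * f x + v * f y) (u * g x + v * g y)"
    using uv by (auto intro!: add_mono mult_left_mono)
  ultimately show "u * min (f x) (g x) + v * min (f y) (g y) \<le> min (f (u *\<^sub>R x + v *\<^sub>R y)) (g (u *\<^sub>R x + v *\<^sub>R y))"
    by linarith
qed

lemma concave_on_affine_extension:
  fixes h :: "real \<Rightarrow> real"
  assumes h: "concave_on UNIV h" and "a \<le> b"
  obtains E \<alpha> \<beta> \<alpha>' \<beta>' where "concave_on UNIV E" "\<And>x. h x \<le> E x" "\<And>x. x \<in> {a..b} \<Longrightarrow> E x = h x"
    "\<And>x. b \<le> x \<Longrightarrow> E x = \<alpha> * x + \<beta>" "\<And>x. x \<le> a \<Longrightarrow> E x = \<alpha>' * x + \<beta>'"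
proof -
  obtain s where s: "\<And>x. h x \<le> h b + s * (x - b)"
    using concave_on_real_supergradient[OF h, where z = b] by blast
  define E1 where "E1 x = (if x \<le> b then h x else h b + s * (x - b))" for x
  have E1: "concave_on UNIV E1"
    unfolding E1_def by (rule concave_on_glue_tangent_right[OF h s])
  obtain s' where s': "\<And>x. E1 x \<le> E1 a + s' * (x - a)"
    using concave_on_real_supergradient[OF E1, where z = a] by blast
  define E where "E x = (if a \<le> x then E1 x else E1 a + s' * (x - a))" for x
  show ?thesis
  proof
    show "concave_on UNIV E"
      unfolding E_def by (rule concave_on_glue_tangent_left[OF E1 s'])
    show "h x \<le> E x" for x
      using s[of x] s'[of x] by (auto simp: E_def E1_def split: if_splits)
    show "E x = h x" if "x \<in> {a..b}" for x
      using that by (simp add: E_def E1_def)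
    show "E x = s * x + (h b - s * b)" if "b \<le> x" for x
      using that \<open>a \<le> b\<close> by (auto simp: E_def E1_def algebra_simps)
    show "E x = s' * x + (h a - s' * a)" if "x \<le> a" for x
      using that \<open>a \<le> b\<close> by (auto simp: E_def E1_def algebra_simps)
  qed
qed

lemma uniformly_continuous_on_linear_growth:
  fixes f :: "real \<Rightarrow> real"
  assumes "uniformly_continuous_on UNIV f"
  obtains A B where "0 \<le> A" "0 \<le> B" "\<And>x. \<bar>f x\<bar> \<le> A + B * \<bar>x\<bar>"
proof -
  obtain d where d: "0 < d" "\<And>x y. dist y x < d \<Longrightarrow> dist (f y) (f x) < 1"
    using assms unfolding uniformly_continuous_on_def by (metis UNIV_I zero_less_one)
  have increment: "\<bar>f x - f 0\<bar> \<le> \<bar>x\<bar> / d + 1" for x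
  proof -
    define n where "n = nat \<lfloor>\<bar>x\<bar> / d\<rfloor> + 1"
    have "real n = \<lfloor>\<bar>x\<bar> / d\<rfloor> + 1" unfolding n_def using d(1) by (simp add: of_nat_nat)
    then have n: "\<bar>x\<bar> / d < n" "real n \<le> \<bar>x\<bar> / d + 1"
      using floor_correct[of "\<bar>x\<bar> / d"] by linarith+
    moreover have n_pos: "0 < real n" by (simp add: n_def)
    ultimately have "\<bar>x\<bar> / n < d" using d(1) by (simp add: field_simps)
    define y where "y i = real i * x / n" for i
    have step: "\<bar>f (y (Suc i)) - f (y i)\<bar> \<le> 1" for i
    proof -
      have "y (Suc i) - y i = x / n" by (simp add: y_def add_divide_distrib distrib_right)
      then have "dist (y (Suc i)) (y i) < d" using \<open>\<bar>x\<bar> / n < d\<close> by (simp add: dist_real_def)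
      then show ?thesis using d(2) by (fastforce simp: dist_real_def)
    qed
    have "\<bar>\<Sum>i<n. f (y (Suc i)) - f (y i)\<bar> \<le> (\<Sum>i<n. \<bar>f (y (Suc i)) - f (y i)\<bar>)"
      by (rule sum_abs)
    also have "\<dots> \<le> (\<Sum>i<n. 1)" using step by (intro sum_mono)
    finally have "\<bar>\<Sum>i<n. f (y (Suc i)) - f (y i)\<bar> \<le> n" by simp
    moreover have "(\<Sum>i<n. f (y (Suc i)) - f (y i)) = f x - f 0"
      using n_pos sum_lessThan_telescope[of "\<lambda>i. f (y i)" n] by (simp add: y_def)
    ultimately show ?thesis using n(2) by linarith
  qed
  have "\<bar>f x\<bar> \<le> (\<bar>f 0\<bar> + 1) + 1 / d * \<bar>x\<bar>" for x
  proof -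
    have "\<bar>x\<bar> / d = 1 / d * \<bar>x\<bar>" by simp
    then show ?thesis using abs_triangle_ineq2[of "f x" "f 0"] increment[of x] by linarith
  qed
  with d(1) show ?thesis using that[of "\<bar>f 0\<bar> + 1" "1 / d"] by simp
qed

lemma uniformly_continuous_on_nonexpansive:
  fixes f :: "real \<Rightarrow> real"
  assumes "\<And>x y. \<bar>f x - f y\<bar> \<le> \<bar>x - y\<bar>"
  shows "uniformly_continuous_on UNIV f"
  by (rule lipschitz_on_uniformly_continuous[where L = 1], rule lipschitz_onI)
    (use assms in \<open>auto simp: dist_real_def\<close>)

lemma uniformly_continuous_on_affine_tails:
  fixes f :: "real \<Rightarrow> real"
  assumes cont: "continuous_on UNIV f"
    and right: "\<And>x. p \<le> x \<Longrightarrow> f x = \<alpha> * x + \<beta>"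
    and left: "\<And>x. x \<le> - p \<Longrightarrow> f x = \<alpha>' * x + \<beta>'"
    and "0 \<le> p"
  shows "uniformly_continuous_on UNIV f"
proof -
  define clamp where "clamp x = max (- p) (min p x)" for x
  have "uniformly_continuous_on UNIV (\<lambda>x. f (clamp x))"
  proof (rule uniformly_continuous_on_compose[where g = clamp])
    show "uniformly_continuous_on UNIV clamp"
      by (rule uniformly_continuous_on_nonexpansive) (simp add: clamp_def split: split_max split_min)
    have "clamp ` UNIV = {-p..p}"
      using \<open>0 \<le> p\<close> by (auto simp: clamp_def image_iff) (metis max_absorb2 min_absorb2)
    then show "uniformly_continuous_on (clamp ` UNIV) f"
      by (metis compact_Icc compact_uniformly_continuous cont continuous_on_subset subset_UNIV)
  qed
  moreover have "uniformly_continuous_on UNIV (\<lambda>x. max (x - p) 0)"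
    "uniformly_continuous_on UNIV (\<lambda>x. min (x + p) 0)"
    by (rule uniformly_continuous_on_nonexpansive, simp split: split_max split_min)+
  ultimately have "uniformly_continuous_on UNIV
      (\<lambda>x. f (clamp x) + \<alpha> * max (x - p) 0 + \<alpha>' * min (x + p) 0)"
    by (intro uniformly_continuous_on_add uniformly_continuous_on_cmul_left)
  moreover have "(\<lambda>x. f (clamp x) + \<alpha> * max (x - p) 0 + \<alpha>' * min (x + p) 0) = f"
    using right[of p] left[of "- p"] right left \<open>0 \<le> p\<close>
    by (force simp: clamp_def max_def min_def algebra_simps)
  ultimately show ?thesis by simp
qed

lemma concave_on_continuous:
  fixes f :: "'a::euclidean_space \<Rightarrow> real"
  assumes "concave_on UNIV f"
  shows "continuous_on UNIV f"
proof -
  have "continuous_on UNIV (\<lambda>x. - f x)"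
    using assms by (intro convex_on_continuous) (auto simp: concave_on_def)
  then show ?thesis using continuous_on_minus by fastforce
qed

lemma quadratic_minorant_of_second_deriv_ge:
  fixes \<Gamma> \<Gamma>1 \<gamma> :: "real \<Rightarrow> real"
  assumes \<Gamma>1: "\<And>x. (\<Gamma> has_real_derivative \<Gamma>1 x) (at x)"
    and \<gamma>: "\<And>x. (\<Gamma>1 has_real_derivative \<gamma> x) (at x)"
    and \<gamma>_ge: "\<And>x. \<iota> \<le> \<gamma> x"
  shows "\<Gamma> a + \<Gamma>1 a * (x - a) + \<iota> * (x - a)\<^sup>2 / 2 \<le> \<Gamma> x"
proof -
  have "(\<Gamma>1 a - \<iota> * a) * (x - a) \<le> (\<Gamma> x - \<iota> * x\<^sup>2 / 2) - (\<Gamma> a - \<iota> * a\<^sup>2 / 2)"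
    by (rule f''_imp_f'[where C = UNIV and f'' = "\<lambda>x. \<gamma> x - \<iota>"])
      (auto intro!: derivative_eq_intros \<Gamma>1 \<gamma> simp: \<gamma>_ge)
  then show ?thesis by (simp add: power2_eq_square field_simps)
qed

lemma eventually_affine_le_of_second_deriv_ge:
  fixes \<Gamma> \<Gamma>1 \<gamma> :: "real \<Rightarrow> real"
  assumes \<Gamma>1: "\<And>x. (\<Gamma> has_real_derivative \<Gamma>1 x) (at x)"
    and \<gamma>: "\<And>x. (\<Gamma>1 has_real_derivative \<gamma> x) (at x)"
    and \<gamma>_ge: "\<And>x. \<iota> \<le> \<gamma> x" and \<iota>: "0 < \<iota>"
  shows "\<forall>\<^sub>F x in at_infinity. a + b * x \<le> \<Gamma> x"
proof -
  define c where "c = \<bar>a - \<Gamma> 0\<bar> + \<bar>b - \<Gamma>1 0\<bar>"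
  have "a + b * x \<le> \<Gamma> x" if x: "max 1 (2 * c / \<iota>) \<le> \<bar>x\<bar>" for x
  proof -
    have "c \<le> \<iota> * \<bar>x\<bar> / 2" using x \<iota> by (simp add: field_simps)
    have "a - \<Gamma> 0 \<le> \<bar>a - \<Gamma> 0\<bar> * \<bar>x\<bar>"
      using x mult_left_mono[of 1 "\<bar>x\<bar>" "\<bar>a - \<Gamma> 0\<bar>"] by simp
    moreover have "(b - \<Gamma>1 0) * x \<le> \<bar>b - \<Gamma>1 0\<bar> * \<bar>x\<bar>" by (metis abs_ge_self abs_mult)
    ultimately have "(a - \<Gamma> 0) + (b - \<Gamma>1 0) * x \<le> c * \<bar>x\<bar>"
      unfolding c_def by (simp add: distrib_right)
    also have "\<dots> \<le> \<iota> * \<bar>x\<bar> / 2 * \<bar>x\<bar>"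
      using \<open>c \<le> \<iota> * \<bar>x\<bar> / 2\<close> by (intro mult_right_mono) auto
    also have "\<dots> = \<iota> * x\<^sup>2 / 2" by (simp add: power2_eq_square)
    finally have "(a - \<Gamma> 0) + (b - \<Gamma>1 0) * x \<le> \<iota> * x\<^sup>2 / 2" .
    then show ?thesis
      using quadratic_minorant_of_second_deriv_ge[OF \<Gamma>1 \<gamma> \<gamma>_ge, of 0 x]
      unfolding left_diff_distrib by simp
  qed
  then show ?thesis unfolding eventually_at_infinity real_norm_def by blast
qed

lemma concave_on_affine: "concave_on UNIV (\<lambda>x::real. a * x + b)"
  by (rule concave_on_linorderI) (auto simp: algebra_simps)

lemma two_mult_abs_le_am_gm:
  fixes B \<iota> x :: real
  assumes "0 < \<iota>"
  shows "2 * B * \<bar>x\<bar> \<le> 2 * B\<^sup>2 / \<iota> + \<iota> * x\<^sup>2 / 2"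
proof -
  have "0 \<le> (2 * B - \<iota> * \<bar>x\<bar>)\<^sup>2 / (2 * \<iota>)" using assms by simp
  also have "\<dots> = 2 * B\<^sup>2 / \<iota> + \<iota> * x\<^sup>2 / 2 - 2 * B * \<bar>x\<bar>"
    using assms by (simp add: field_simps power2_eq_square)
  finally show ?thesis by simp
qed

lemma concave_majorant_with_linear_tails:
  fixes h \<Gamma> \<Gamma>1 \<gamma> :: "real \<Rightarrow> real"
  assumes \<Gamma>1: "\<And>x. (\<Gamma> has_real_derivative \<Gamma>1 x) (at x)"
    and \<gamma>: "\<And>x. (\<Gamma>1 has_real_derivative \<gamma> x) (at x)"
    and \<gamma>_ge: "\<And>x. \<iota> \<le> \<gamma> x" and \<iota>: "0 < \<iota>"
    and growth: "\<And>x. h x + \<Gamma> x \<le> A + B * \<bar>x\<bar>"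
  obtains \<Psi> where "concave_on UNIV \<Psi>" "\<And>x. h x \<le> \<Psi> x"
    "\<And>x. \<Psi> x + \<Gamma> x \<le> A + 2 * B\<^sup>2 / \<iota> + B * \<bar>x\<bar>"
    "\<forall>\<^sub>F x in at_infinity. \<Psi> x + \<Gamma> x = A + 2 * B\<^sup>2 / \<iota> + B * \<bar>x\<bar>"
proof -
  define c where "c = A + 2 * B\<^sup>2 / \<iota>"
  have \<Gamma>_above_tangent: "\<Gamma> 0 + \<Gamma>1 0 * x + \<iota> * x\<^sup>2 / 2 \<le> \<Gamma> x" for x
    using quadratic_minorant_of_second_deriv_ge[OF \<Gamma>1 \<gamma> \<gamma>_ge, of 0 x] by simp
  have \<Gamma>_above_affine: "\<Gamma> 0 + \<Gamma>1 0 * x \<le> \<Gamma> x" for x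
  proof -
    have "0 \<le> \<iota> * x\<^sup>2 / 2" using \<iota> by simp
    then show ?thesis using \<Gamma>_above_tangent[of x] by linarith
  qed
  have "0 \<le> 2 * B\<^sup>2 / \<iota>" using \<iota> by simp
  have "convex_on UNIV \<Gamma>"
    using \<gamma>_ge \<iota> by (intro f''_ge0_imp_convex[OF _ \<Gamma>1 \<gamma>]) (auto intro: order.trans[of 0 \<iota>])
  then have concave: "concave_on UNIV (\<lambda>x. a * x + c - \<Gamma> x)" for a
    by (intro concave_on_diff concave_on_affine)
  \<comment> \<open>On one half-line these follow \<open>c \<plusminus> B x - \<Gamma>\<close>; on the other they follow the tangent line at 0,
    which dominates \<open>h\<close> there because \<open>\<Gamma>\<close> grows quadratically.\<close>
  define \<psi> where "\<psi> = (\<lambda>x. if 0 \<le> x then c + B * x - \<Gamma> x else c - \<Gamma> 0 + (B - \<Gamma>1 0) * x)"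
  define \<psi>' where "\<psi>' = (\<lambda>x. if x \<le> 0 then c - B * x - \<Gamma> x else c - \<Gamma> 0 - (B + \<Gamma>1 0) * x)"
  have "concave_on UNIV \<psi>" unfolding \<psi>_def
    by (rule back_subst[where P = "concave_on UNIV",
          OF concave_on_glue_tangent_left[OF concave[of B], of 0 "B - \<Gamma>1 0"]])
      (use \<Gamma>_above_affine in \<open>auto simp: fun_eq_iff algebra_simps\<close>)
  moreover have "concave_on UNIV \<psi>'" unfolding \<psi>'_def
    by (rule back_subst[where P = "concave_on UNIV",
          OF concave_on_glue_tangent_right[OF concave[of "- B"], of 0 "- B - \<Gamma>1 0"]])
      (use \<Gamma>_above_affine in \<open>auto simp: fun_eq_iff algebra_simps\<close>)
  moreover have "h x \<le> \<psi> x" "h x \<le> \<psi>' x" for x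
    using two_mult_abs_le_am_gm[OF \<iota>, of B x] \<Gamma>_above_tangent[of x] growth[of x] \<open>0 \<le> 2 * B\<^sup>2 / \<iota>\<close>
    unfolding \<psi>_def \<psi>'_def c_def by (auto simp: algebra_simps)
  moreover have "min (\<psi> x) (\<psi>' x) + \<Gamma> x \<le> c + B * \<bar>x\<bar>" for x
    unfolding \<psi>_def \<psi>'_def by auto
  moreover have "\<forall>\<^sub>F x in at_infinity. min (\<psi> x) (\<psi>' x) + \<Gamma> x = c + B * \<bar>x\<bar>"
    using eventually_affine_le_of_second_deriv_ge[OF \<Gamma>1 \<gamma> \<gamma>_ge \<iota>, where a = "\<Gamma> 0" and b = "\<Gamma>1 0 + 2 * B"]
      eventually_affine_le_of_second_deriv_ge[OF \<Gamma>1 \<gamma> \<gamma>_ge \<iota>, where a = "\<Gamma> 0" and b = "\<Gamma>1 0 - 2 * B"]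
    by eventually_elim (auto simp: \<psi>_def \<psi>'_def algebra_simps)
  ultimately show ?thesis
    using that[of "\<lambda>x. min (\<psi> x) (\<psi>' x)"] concave_on_min unfolding c_def by fastforce
qed

definition concave_modification ::
    "(real \<Rightarrow> real) \<Rightarrow> (real \<Rightarrow> real) \<Rightarrow> real \<Rightarrow> real \<Rightarrow> real \<Rightarrow> (real \<Rightarrow> real) \<Rightarrow> real \<Rightarrow> bool"
  where "concave_modification \<Gamma> u C B K G p \<longleftrightarrow>
    concave_on UNIV (\<lambda>x. G x - \<Gamma> x) \<and> K \<le> p \<and> (\<forall>x. u x \<le> G x) \<and> (\<forall>x\<in>{-K..K}. G x = u x) \<and>
    (\<forall>x. G x \<le> C + B * \<bar>x\<bar>) \<and> (\<forall>x. p \<le> \<bar>x\<bar> \<longrightarrow> G x = C + B * \<bar>x\<bar>)"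

lemma concave_modification_exists:
  fixes h \<Gamma> \<Gamma>1 \<gamma> :: "real \<Rightarrow> real"
  assumes h: "concave_on UNIV h"
    and \<Gamma>1: "\<And>x. (\<Gamma> has_real_derivative \<Gamma>1 x) (at x)"
    and \<gamma>: "\<And>x. (\<Gamma>1 has_real_derivative \<gamma> x) (at x)"
    and \<gamma>_ge: "\<And>x. \<iota> \<le> \<gamma> x" and \<iota>: "0 < \<iota>"
    and growth: "\<And>x. h x + \<Gamma> x \<le> A + B * \<bar>x\<bar>"
    and K: "0 \<le> K"
  shows "\<exists>G p. concave_modification \<Gamma> (\<lambda>x. h x + \<Gamma> x) (A + 2 * B\<^sup>2 / \<iota>) B K G p"
proof -
  define c where "c = A + 2 * B\<^sup>2 / \<iota>"
  obtain \<Psi> where \<Psi>: "concave_on UNIV \<Psi>" "\<And>x. h x \<le> \<Psi> x" "\<And>x. \<Psi> x + \<Gamma> x \<le> c + B * \<bar>x\<bar>"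
    and \<Psi>_tails: "\<forall>\<^sub>F x in at_infinity. \<Psi> x + \<Gamma> x = c + B * \<bar>x\<bar>"
    using concave_majorant_with_linear_tails[OF \<Gamma>1 \<gamma> \<gamma>_ge \<iota> growth] unfolding c_def by blast
  have "- K \<le> K" using K by simp
  then obtain E \<alpha> \<beta> \<alpha>' \<beta>' where E: "concave_on UNIV E" "\<And>x. h x \<le> E x" "\<And>x. x \<in> {-K..K} \<Longrightarrow> E x = h x"
    and E_right: "\<And>x. K \<le> x \<Longrightarrow> E x = \<alpha> * x + \<beta>"
    and E_left: "\<And>x. x \<le> - K \<Longrightarrow> E x = \<alpha>' * x + \<beta>'"
    using concave_on_affine_extension[OF h] by blast
  have "\<forall>\<^sub>F x in at_infinity. K \<le> \<bar>x\<bar>"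
    unfolding eventually_at_infinity real_norm_def by blast
  then have "\<forall>\<^sub>F x in at_infinity. \<Psi> x \<le> E x \<and> \<Psi> x + \<Gamma> x = c + B * \<bar>x\<bar> \<and> K \<le> \<bar>x\<bar>"
    using \<Psi>_tails
      eventually_affine_le_of_second_deriv_ge[OF \<Gamma>1 \<gamma> \<gamma>_ge \<iota>, where a = "c - \<beta>" and b = "B - \<alpha>"]
      eventually_affine_le_of_second_deriv_ge[OF \<Gamma>1 \<gamma> \<gamma>_ge \<iota>, where a = "c - \<beta>'" and b = "- B - \<alpha>'"]
  proof eventually_elim
    case (elim x)
    then show ?case
      using E_right[of x] E_left[of x] K by (cases "0 \<le> x") (auto simp: algebra_simps)
  qed
  then obtain N where N: "\<And>x. N \<le> \<bar>x\<bar> \<Longrightarrow> \<Psi> x \<le> E x \<and> \<Psi> x + \<Gamma> x = c + B * \<bar>x\<bar> \<and> K \<le> \<bar>x\<bar>"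
    unfolding eventually_at_infinity real_norm_def by blast
  show ?thesis
    unfolding concave_modification_def c_def[symmetric]
  proof (intro exI[of _ "\<lambda>x. min (E x) (\<Psi> x) + \<Gamma> x"] exI[of _ "max K N"] conjI allI ballI impI)
    show "concave_on UNIV (\<lambda>x. min (E x) (\<Psi> x) + \<Gamma> x - \<Gamma> x)"
      using concave_on_min[OF E(1) \<Psi>(1)] by simp
    show "h x + \<Gamma> x \<le> min (E x) (\<Psi> x) + \<Gamma> x" for x using E(2) \<Psi>(2) by simp
    show "min (E x) (\<Psi> x) + \<Gamma> x = h x + \<Gamma> x" if "x \<in> {-K..K}" for x
      using E(3)[OF that] \<Psi>(2)[of x] by simp
    show "min (E x) (\<Psi> x) + \<Gamma> x \<le> c + B * \<bar>x\<bar>" for x using \<Psi>(3)[of x] by linarith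
    show "min (E x) (\<Psi> x) + \<Gamma> x = c + B * \<bar>x\<bar>" if "max K N \<le> \<bar>x\<bar>" for x
      using N[of x] that by simp
  qed simp
qed

lemma concave_modification_tails:
  assumes G: "concave_modification \<Gamma> u C B K G p" and K: "0 \<le> K"
  shows "\<forall>x\<ge>p. G x = B * x + C" "\<forall>x\<le>- p. G x = - B * x + C"
  using G K unfolding concave_modification_def by auto

lemma concave_modification_uniformly_continuous:
  assumes G: "concave_modification \<Gamma> u C B K G p" and K: "0 \<le> K"
    and \<Gamma>: "continuous_on UNIV \<Gamma>"
  shows "uniformly_continuous_on UNIV G"
proof (rule uniformly_continuous_on_affine_tails)
  have "continuous_on UNIV (\<lambda>x. G x - \<Gamma> x)"
    using G unfolding concave_modification_def by (intro concave_on_continuous) blast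
  then have "continuous_on UNIV (\<lambda>x. (G x - \<Gamma> x) + \<Gamma> x)" using \<Gamma> by (rule continuous_on_add)
  then show "continuous_on UNIV G" by simp
  show "G x = B * x + C" if "p \<le> x" for x using concave_modification_tails(1)[OF G K] that by blast
  show "G x = - B * x + C" if "x \<le> - p" for x using concave_modification_tails(2)[OF G K] that by blast
  show "0 \<le> p" using G K unfolding concave_modification_def by linarith
qed

lemma concave_modification_abs_le:
  assumes G: "concave_modification \<Gamma> u C B K G p"
    and growth: "\<And>x. \<bar>u x\<bar> \<le> A + B * \<bar>x\<bar>" and "A \<le> C" "0 \<le> A" "0 \<le> B"
  shows "\<bar>G x\<bar> \<le> (C + B) * (1 + \<bar>x\<bar>)"
proof -
  have "u x \<le> G x" "G x \<le> C + B * \<bar>x\<bar>" using G unfolding concave_modification_def by auto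
  moreover have "0 \<le> C * \<bar>x\<bar>" using \<open>A \<le> C\<close> \<open>0 \<le> A\<close> by simp
  ultimately show ?thesis
    using growth[of x, unfolded abs_le_iff] \<open>A \<le> C\<close> \<open>0 \<le> B\<close>
    unfolding abs_le_iff distrib_left distrib_right by linarith
qed

lemma concave_modifications_exist:
  fixes h \<Gamma> \<gamma> :: "real \<Rightarrow> real"
  assumes h: "concave_on UNIV h" and \<Gamma>: "C2_with_second_deriv \<Gamma> \<gamma>"
    and \<gamma>_ge: "\<And>x. \<iota> \<le> \<gamma> x" and \<iota>: "0 < \<iota>"
    and growth: "\<And>x. h x + \<Gamma> x \<le> A + B * \<bar>x\<bar>"
  obtains G p
  where "\<And>K. 0 \<le> K \<Longrightarrow> concave_modification \<Gamma> (\<lambda>x. h x + \<Gamma> x) (A + 2 * B\<^sup>2 / \<iota>) B K (G K) (p K)"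
proof -
  let ?P = "\<lambda>K G p. 0 \<le> K \<longrightarrow> concave_modification \<Gamma> (\<lambda>x. h x + \<Gamma> x) (A + 2 * B\<^sup>2 / \<iota>) B K G p"
  obtain \<Gamma>1 where \<Gamma>1: "\<And>x. (\<Gamma> has_real_derivative \<Gamma>1 x) (at x)"
    and \<gamma>: "\<And>x. (\<Gamma>1 has_real_derivative \<gamma> x) (at x)"
    using \<Gamma> unfolding C2_with_second_deriv_def by blast
  have "\<forall>K. \<exists>G p. ?P K G p"
    using concave_modification_exists[OF h \<Gamma>1 \<gamma> \<gamma>_ge \<iota> growth] by blast
  then obtain G where "\<forall>K. \<exists>p. ?P K (G K) p" using choice[of "\<lambda>K G. \<exists>p. ?P K G p"] by blast
  then obtain p where "\<forall>K. ?P K (G K) (p K)" using choice[of "\<lambda>K p. ?P K (G K) p"] by blast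
  then show ?thesis using that by blast
qed

lemma concave_modifications_eventually_eq:
  assumes G: "\<And>K. 0 < K \<Longrightarrow> concave_modification \<Gamma> u C B K (G K) (p K)" and S: "compact S"
  shows "\<exists>K0. \<forall>K\<ge>K0. \<forall>x\<in>S. G K x = u x"
proof -
  obtain R where R: "\<And>x. x \<in> S \<Longrightarrow> \<bar>x\<bar> \<le> R"
    using compact_imp_bounded[OF S] unfolding bounded_real by blast
  have "G K x = u x" if "max R 1 \<le> K" "x \<in> S" for K x
  proof -
    have "0 < K" "x \<in> {-K..K}" using R[OF that(2)] that(1) by auto
    then show ?thesis using G[OF \<open>0 < K\<close>] unfolding concave_modification_def by blast
  qed
  then show ?thesis by blast
qed

lemma C2_with_second_deriv_continuous:
  assumes "C2_with_second_deriv \<Gamma> \<gamma>"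
  shows "continuous_on UNIV \<Gamma>"
  using assms unfolding C2_with_second_deriv_def
  by (metis DERIV_isCont continuous_at_imp_continuous_on)

lemma concave_on_conc_env: "concave_on UNIV (conc_env h)"
proof (cases "\<exists>\<phi>. concave_on UNIV \<phi> \<and> (\<forall>y. h y \<le> \<phi> y)")
  case True
  then obtain \<phi>0 where \<phi>0: "concave_on UNIV \<phi>0" "\<forall>y. h y \<le> \<phi>0 y" by blast
  define M where "M x = {\<phi> x | \<phi>. concave_on UNIV \<phi> \<and> (\<forall>y. h y \<le> \<phi> y)}" for x
  have conc_env_eq: "conc_env h x = Inf (M x)" for x unfolding conc_env_def M_def by simp
  have M_nonempty: "M x \<noteq> {}" for x unfolding M_def using \<phi>0 by blast
  have M_bdd: "bdd_below (M x)" for x unfolding M_def bdd_below_def by (intro exI[of _ "h x"]) auto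
  show ?thesis unfolding concave_on_iff conc_env_eq
  proof (intro conjI ballI allI impI)
    fix x y u v :: real assume uv: "0 \<le> u" "0 \<le> v" "u + v = 1"
    show "u * Inf (M x) + v * Inf (M y) \<le> Inf (M (u *\<^sub>R x + v *\<^sub>R y))"
    proof (rule cInf_greatest[OF M_nonempty])
      fix w assume "w \<in> M (u *\<^sub>R x + v *\<^sub>R y)"
      then obtain \<phi> where \<phi>: "w = \<phi> (u *\<^sub>R x + v *\<^sub>R y)" "concave_on UNIV \<phi>" "\<forall>y. h y \<le> \<phi> y"
        unfolding M_def by blast
      have "Inf (M z) \<le> \<phi> z" for z
        using \<phi>(2,3) by (intro cInf_lower[OF _ M_bdd]) (auto simp: M_def)
      then have "u * Inf (M x) + v * Inf (M y) \<le> u * \<phi> x + v * \<phi> y"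
        using uv by (intro add_mono mult_left_mono)
      also have "\<dots> \<le> w" using \<phi> uv unfolding concave_on_iff by blast
      finally show "u * Inf (M x) + v * Inf (M y) \<le> w" .
    qed
  qed simp
next
  case False
  then have "{\<phi> x | \<phi>. concave_on UNIV \<phi> \<and> (\<forall>y. h y \<le> \<phi> y)} = {}" for x by blast
  then have "conc_env h = (\<lambda>x. Inf {})" unfolding conc_env_def by presburger
  then show ?thesis by (simp add: concave_on_const)
qed

lemma concave_on_diff_same_second_deriv:
  assumes "C2_with_second_deriv \<Gamma> \<gamma>" "C2_with_second_deriv \<Gamma>' \<gamma>"
  shows "concave_on UNIV (\<lambda>x. \<Gamma> x - \<Gamma>' x)"
proof -
  obtain \<Gamma>1 \<Gamma>1' where "\<And>x. (\<Gamma> has_real_derivative \<Gamma>1 x) (at x)" "\<And>x. (\<Gamma>1 has_real_derivative \<gamma> x) (at x)"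
    "\<And>x. (\<Gamma>' has_real_derivative \<Gamma>1' x) (at x)" "\<And>x. (\<Gamma>1' has_real_derivative \<gamma> x) (at x)"
    using assms unfolding C2_with_second_deriv_def by blast
  then show ?thesis
    by (intro f''_le0_imp_concave[where f' = "\<lambda>x. \<Gamma>1 x - \<Gamma>1' x" and f'' = "\<lambda>x. 0"])
      (auto intro!: derivative_eq_intros)
qed

theorem lemma2p1:
  fixes f \<gamma> g \<Gamma> :: "real \<Rightarrow> real" and \<iota> :: real
  assumes f_C2b: "C2b f"
    and f_pos: "Inf (range f) > 0"
    and \<gamma>_bdd: "bounded (range \<gamma>)"
    and \<gamma>_cont: "continuous_on UNIV \<gamma>"
    and \<iota>_pos: "\<iota> > 0"
    and \<gamma>_bounds: "\<And>x. \<iota> \<le> \<gamma> x \<and> \<gamma> x \<le> 1 / f x - \<iota>"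
    and g_lsc: "lsc g"
    and g_neg_bdd: "\<exists>B. \<forall>x. max (- g x) 0 \<le> B"
    and g_pos_lin: "\<exists>C. \<forall>x. max (g x) 0 \<le> C * (1 + \<bar>x\<bar>)"
    and \<Gamma>: "C2_with_second_deriv \<Gamma> \<gamma>"
    and ghat_uc: "uniformly_continuous_on UNIV (\<lambda>x. conc_env (\<lambda>y. g y - \<Gamma> y) x + \<Gamma> x)"
  shows "\<exists>(G :: real \<Rightarrow> real \<Rightarrow> real) (xK :: real \<Rightarrow> real).
     (\<forall>K>0.
        uniformly_continuous_on UNIV (G K) \<and> xK K \<ge> K \<and>
        (\<exists>a b. \<forall>x\<ge>xK K. G K x = a * x + b) \<and>
        (\<exists>a b. \<forall>x\<le>- xK K. G K x = a * x + b) \<and>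
        (\<forall>x\<in>{-K..K}. G K x = conc_env (\<lambda>y. g y - \<Gamma> y) x + \<Gamma> x) \<and>
        (\<forall>x. G K x \<ge> conc_env (\<lambda>y. g y - \<Gamma> y) x + \<Gamma> x) \<and>
        (\<forall>\<Gamma>'. C2_with_second_deriv \<Gamma>' \<gamma> \<longrightarrow> concave_on UNIV (\<lambda>x. G K x - \<Gamma>' x))) \<and>
     (\<exists>C. \<forall>K>0. \<forall>x. \<bar>G K x\<bar> \<le> C * (1 + \<bar>x\<bar>)) \<and>
     (\<forall>S. compact S \<longrightarrow> (\<forall>\<epsilon>>0. \<exists>K0. \<forall>K\<ge>K0. \<forall>x\<in>S.
        \<bar>G K x - (conc_env (\<lambda>y. g y - \<Gamma> y) x + \<Gamma> x)\<bar> < \<epsilon>))"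
proof -
  define h where "h = conc_env (\<lambda>y. g y - \<Gamma> y)"
  obtain A B where "0 \<le> A" "0 \<le> B" and growth: "\<And>x. \<bar>h x + \<Gamma> x\<bar> \<le> A + B * \<bar>x\<bar>"
    using uniformly_continuous_on_linear_growth[OF ghat_uc] unfolding h_def by blast
  define C where "C = A + 2 * B\<^sup>2 / \<iota>"
  have "A \<le> C" using \<iota>_pos by (simp add: C_def)
  obtain G p where G: "\<And>K. 0 \<le> K \<Longrightarrow> concave_modification \<Gamma> (\<lambda>x. h x + \<Gamma> x) C B K (G K) (p K)"
    using concave_modifications_exist[OF _ \<Gamma> _ \<iota>_pos abs_le_D1[OF growth]] \<gamma>_bounds
    unfolding h_def C_def by (metis concave_on_conc_env)
  note G_def = G[unfolded concave_modification_def]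
  show ?thesis
    unfolding h_def[symmetric]
  proof (intro exI[of _ G] exI[of _ p] conjI allI impI ballI)
    fix K :: real assume "0 < K"
    then have K: "0 \<le> K" by simp
    show "uniformly_continuous_on UNIV (G K)"
      by (rule concave_modification_uniformly_continuous[OF G[OF K] K C2_with_second_deriv_continuous[OF \<Gamma>]])
    show "K \<le> p K" "h x + \<Gamma> x \<le> G K x" "x \<in> {-K..K} \<Longrightarrow> G K x = h x + \<Gamma> x" for x
      using G_def[OF K] by auto
    show "\<exists>a b. \<forall>x\<ge>p K. G K x = a * x + b" "\<exists>a b. \<forall>x\<le>- p K. G K x = a * x + b"
      using concave_modification_tails[OF G[OF K] K] by blast+
    show "concave_on UNIV (\<lambda>x. G K x - \<Gamma>' x)" if "C2_with_second_deriv \<Gamma>' \<gamma>" for \<Gamma>'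
      using concave_on_add[OF conjunct1[OF G_def[OF K]] concave_on_diff_same_second_deriv[OF \<Gamma> that]]
      by simp
  next
    show "\<exists>C. \<forall>K>0. \<forall>x. \<bar>G K x\<bar> \<le> C * (1 + \<bar>x\<bar>)"
      using concave_modification_abs_le[OF G growth \<open>A \<le> C\<close> \<open>0 \<le> A\<close> \<open>0 \<le> B\<close>] by (meson less_imp_le)
  next
    show "\<exists>K0. \<forall>K\<ge>K0. \<forall>x\<in>S. \<bar>G K x - (h x + \<Gamma> x)\<bar> < \<epsilon>" if S: "compact S" and "0 < \<epsilon>" for S \<epsilon>
    proof -
      obtain K0 where "\<forall>K\<ge>K0. \<forall>x\<in>S. G K x = h x + \<Gamma> x"
        using concave_modifications_eventually_eq[OF G[OF less_imp_le] S] by blast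
      with \<open>0 < \<epsilon>\<close> show ?thesis by (intro exI[of _ K0] allI impI ballI) simp
    qed
  qed
qed

end
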